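(* Under the hypotheses of Lemma 2 (stated in the context), let $\bm{U}\bm{\Sigma}\bm{V}^\top$ be the compact SVD of $\bm{X}\bm{Y}^\top$. There exists an invertible $\bm{Q}\in\mathbb{R}^{r\times r}$ with $\bm{X}=\bm{U}\bm{\Sigma}^{1/2}\bm{Q}$, $\bm{Y}=\bm{V}\bm{\Sigma}^{1/2}\bm{Q}^{-\top}$ and $\|\bm{\Sigma}_{\bm{Q}}-\bm{\Sigma}_{\bm{Q}}^{-1}\|_{\mathrm{F}}\le 8\sqrt{\kappa}\frac{p}{\lambda\sqrt{\sigma_{\min}}}\|\nabla f(\bm{X},\bm{Y})\|_{\mathrm{F}}\le 8c\sqrt{c_{\mathrm{inj}}p/\kappa}$, where $\bm{\Sigma}_{\bm{Q}}$ is the diagonal matrix of singular values of $\bm{Q}$ and $c$ is the constant in the gradient hypothesis.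
   Context: Setting: $\bm{M}^\star\in\mathbb{R}^{n\times n}$ rank $r$, nonzero singular values in $[\sigma_{\min},\sigma_{\max}]$, $\kappa=\sigma_{\max}/\sigma_{\min}$, $\bm{M}=\bm{M}^\star+\bm{E}$, $\Omega\subseteq[n]^2$, $p\in(0,1]$, $\lambda>0$, $\mathcal{P}_\Omega$ zeros entries outside $\Omega$. $f(\bm{X},\bm{Y})=\frac{1}{2p}\|\mathcal{P}_\Omega(\bm{X}\bm{Y}^\top-\bm{M})\|_{\mathrm{F}}^2+\frac{\lambda}{2p}(\|\bm{X}\|_{\mathrm{F}}^2+\|\bm{Y}\|_{\mathrm{F}}^2)$ with $\nabla_{\bm{X}}f=\frac1p[\mathcal{P}_\Omega(\bm{X}\bm{Y}^\top-\bm{M})\bm{Y}+\lambda\bm{X}]$, $\nabla_{\bm{Y}}f=\frac1p[\mathcal{P}_\Omega(\bm{X}\bm{Y}^\top-\bm{M})^\top\bm{X}+\lambda\bm{Y}]$. Hypotheses of Lemma 2: $\bm{X},\bm{Y}\in\mathbb{R}^{n\times r}$ have all singular values in $[\sqrt{\sigma_{\min}/2},\sqrt{2\sigma_{\max}}]$; $\|\mathcal{P}_\Omega(\bm{E})\|<\lambda/8$; $\|\mathcal{P}_\Omega(\bm{X}\bm{Y}^\top-\bm{M}^\star)-p(\bm{X}\bm{Y}^\top-\bm{M}^\star)\|<\lambda/8$; there is $c_{\mathrm{inj}}>0$ with $p^{-1}\|\mathcal{P}_\Omega(\bm{H})\|_{\mathrm{F}}^2\ge c_{\mathrm{inj}}\|\bm{H}\|_{\mathrm{F}}^2$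 for all $\bm{H}$ in the tangent space $\{\bm{U}\bm{A}^\top+\bm{B}\bm{V}^\top\}$ of $\bm{X}\bm{Y}^\top$; and $\|\nabla f(\bm{X},\bm{Y})\|_{\mathrm{F}}\le c\frac{\sqrt{c_{\mathrm{inj}}p}}{\kappa}\frac{\lambda}{p}\sqrt{\sigma_{\min}}$ for a sufficiently small absolute constant $c$. *)

theory Defs
  imports "Jordan_Normal_Form.DL_Rank" "Jordan_Normal_Form.Char_Poly"
begin

text \<open>Real matrices are represented as JNF matrices of type real mat with explicit
dimensions, so that the dimensions n and r can be universally quantified inside the
statement (needed because the constant c must be absolute, i.e. independent of n, r).
Indices are 0-based: [n] is rendered as {0..<n}.\<close>

definition frob :: "real mat \<Rightarrow> real" where
  "frob A = sqrt (\<Sum>i<dim_row A. \<Sum>j<dim_col A. (A $$ (i,j))\<^sup>2)"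

definition vnorm :: "real vec \<Rightarrow> real" where
  "vnorm v = sqrt (v \<bullet> v)"

definition op_norm :: "real mat \<Rightarrow> real" where
  "op_norm A = Sup {vnorm (A *\<^sub>v v) | v. v \<in> carrier_vec (dim_col A) \<and> vnorm v \<le> 1}"

definition sing_vals :: "real mat \<Rightarrow> real set" where
  "sing_vals A = {s. s \<ge> 0 \<and> eigenvalue (transpose_mat A * A) (s\<^sup>2)}"

definition orthonormal_cols :: "real mat \<Rightarrow> bool" where
  "orthonormal_cols U \<longleftrightarrow> transpose_mat U * U = 1\<^sub>m (dim_col U)"

definition compact_svd :: "nat \<Rightarrow> nat \<Rightarrow> real mat \<Rightarrow> real mat \<Rightarrow> real mat \<Rightarrow> real mat \<Rightarrow> bool" where
  "compact_svd n r A U S V \<longleftrightarrow>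
     U \<in> carrier_mat n r \<and> V \<in> carrier_mat n r \<and> S \<in> carrier_mat r r \<and>
     orthonormal_cols U \<and> orthonormal_cols V \<and> diagonal_mat S \<and>
     (\<forall>i<r. S $$ (i,i) > 0) \<and> (\<forall>i j. i \<le> j \<longrightarrow> j < r \<longrightarrow> S $$ (j,j) \<le> S $$ (i,i)) \<and>
     A = U * S * transpose_mat V"

definition square_svd :: "nat \<Rightarrow> real mat \<Rightarrow> real mat \<Rightarrow> real mat \<Rightarrow> real mat \<Rightarrow> bool" where
  "square_svd r Q P D R \<longleftrightarrow>
     P \<in> carrier_mat r r \<and> R \<in> carrier_mat r r \<and> D \<in> carrier_mat r r \<and>
     orthonormal_cols P \<and> orthonormal_cols R \<and> diagonal_mat D \<and>
     (\<forall>i<r. D $$ (i,i) \<ge> 0) \<and> Q = P * D * transpose_mat R"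

definition diag_sqrt :: "real mat \<Rightarrow> real mat" where
  "diag_sqrt S = mat (dim_row S) (dim_col S) (\<lambda>(i,j). if i = j then sqrt (S $$ (i,i)) else 0)"

definition diag_inv :: "real mat \<Rightarrow> real mat" where
  "diag_inv S = mat (dim_row S) (dim_col S) (\<lambda>(i,j). if i = j then 1 / S $$ (i,i) else 0)"

definition P_Omega :: "(nat \<times> nat) set \<Rightarrow> real mat \<Rightarrow> real mat" where
  "P_Omega \<Omega> A = mat (dim_row A) (dim_col A) (\<lambda>ij. if ij \<in> \<Omega> then A $$ ij else 0)"

definition grad_X :: "(nat \<times> nat) set \<Rightarrow> real \<Rightarrow> real \<Rightarrow> real mat \<Rightarrow> real mat \<Rightarrow> real mat \<Rightarrow> real mat" where
  "grad_X \<Omega> p lam M X Y =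
     (1/p) \<cdot>\<^sub>m (P_Omega \<Omega> (X * transpose_mat Y - M) * Y + lam \<cdot>\<^sub>m X)"

definition grad_Y :: "(nat \<times> nat) set \<Rightarrow> real \<Rightarrow> real \<Rightarrow> real mat \<Rightarrow> real mat \<Rightarrow> real mat \<Rightarrow> real mat" where
  "grad_Y \<Omega> p lam M X Y =
     (1/p) \<cdot>\<^sub>m (transpose_mat (P_Omega \<Omega> (X * transpose_mat Y - M)) * X + lam \<cdot>\<^sub>m Y)"

definition grad_norm :: "(nat \<times> nat) set \<Rightarrow> real \<Rightarrow> real \<Rightarrow> real mat \<Rightarrow> real mat \<Rightarrow> real mat \<Rightarrow> real" where
  "grad_norm \<Omega> p lam M X Y = sqrt ((frob (grad_X \<Omega> p lam M X Y))\<^sup>2 + (frob (grad_Y \<Omega> p lam M X Y))\<^sup>2)"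

end

theory Submission
  imports Defs "HOL-Analysis.Analysis"
begin

text \<open>
  Since \<open>X Y\<^sup>T = U \<Sigma> V\<^sup>T\<close> has rank \<open>r\<close>, the columns of \<open>X\<close> and \<open>Y\<close> lie in the ranges of
  \<open>U\<close> and \<open>V\<close>, which gives the factorisation \<open>X = U \<Sigma>\<^sup>1\<^sup>/\<^sup>2 Q\<close>, \<open>Y = V \<Sigma>\<^sup>1\<^sup>/\<^sup>2 Q\<^sup>-\<^sup>T\<close>.
  The gradient satisfies the balancing identity
  \<open>X\<^sup>T \<nabla>\<^sub>X f - (\<nabla>\<^sub>Y f)\<^sup>T Y = (\<lambda>/p) (X\<^sup>T X - Y\<^sup>T Y)\<close>, in which the data-fit terms cancel.
  Along a right singular vector of \<open>Q\<close> with singular value \<open>d\<close>, the factors \<open>X\<close> and \<open>Y\<close> act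
  as \<open>d\<close> and \<open>1/d\<close> times isometric images of one and the same vector, whose squared length is
  at least \<open>\<sigma>\<^sub>m\<^sub>i\<^sub>n/2\<close> by the lower singular value bound (obtained from a minimiser of the Rayleigh
  quotient of \<open>X\<^sup>T X\<close>). Cauchy--Schwarz then bounds \<open>(d - 1/d)\<^sup>2\<close> by the gradient in that
  direction, and summing over the orthonormal right singular vectors of \<open>Q\<close> gives
  \<open>\<parallel>\<Sigma>\<^sub>Q - \<Sigma>\<^sub>Q\<^sup>-\<^sup>1\<parallel>\<^sub>F \<le> \<surd>2 p \<parallel>\<nabla>f\<parallel>\<^sub>F / (\<lambda> \<surd>\<sigma>\<^sub>m\<^sub>i\<^sub>n)\<close>.
  The second inequality is the gradient hypothesis, rescaled.
\<close>

section \<open>Vectors and the Rayleigh quotient\<close>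

lemma scalar_prod_self_nonneg:
  fixes v :: "real Matrix.vec"
  shows "0 \<le> v \<bullet> v"
  using conjugate_square_ge_0_vec[of v] by simp

lemma scalar_prod_self_eq_0_iff:
  fixes v :: "real Matrix.vec"
  assumes "v \<in> carrier_vec n"
  shows "v \<bullet> v = 0 \<longleftrightarrow> v = 0\<^sub>v n"
  using conjugate_square_eq_0_vec[OF assms] by simp

lemma scalar_prod_self_sum:
  fixes v :: "real Matrix.vec"
  assumes "v \<in> carrier_vec n"
  shows "v \<bullet> v = (\<Sum>i<n. (v $ i)\<^sup>2)"
  using assms by (simp add: scalar_prod_def power2_eq_square lessThan_atLeast0)

lemma scalar_prod_add_smult_self:
  fixes x y :: "real Matrix.vec"
  assumes x: "x \<in> carrier_vec n" and y: "y \<in> carrier_vec n"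
  shows "(x + t \<cdot>\<^sub>v y) \<bullet> (x + t \<cdot>\<^sub>v y) = x \<bullet> x + 2 * t * (x \<bullet> y) + t\<^sup>2 * (y \<bullet> y)"
proof -
  have "(x + t \<cdot>\<^sub>v y) \<bullet> (x + t \<cdot>\<^sub>v y) = x \<bullet> x + t * (y \<bullet> x) + t * (x \<bullet> y) + t * (t * (y \<bullet> y))"
    using x y by (simp add: add_scalar_prod_distrib[of _ n] scalar_prod_add_distrib[of _ n] algebra_simps)
  then show ?thesis
    using comm_scalar_prod[OF y x] by (simp add: power2_eq_square algebra_simps)
qed

lemma cauchy_schwarz_scalar_prod:
  fixes x y :: "real Matrix.vec"
  assumes "x \<in> carrier_vec n" and "y \<in> carrier_vec n"
  shows "(x \<bullet> y)\<^sup>2 \<le> (x \<bullet> x) * (y \<bullet> y)"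
  using Cauchy_Schwarz_ineq_sum[of "\<lambda>i. x $ i" "\<lambda>i. y $ i" "{0..<n}"] assms
  by (simp add: scalar_prod_def power2_eq_square)

lemma smult_mat_mult_vec:
  fixes A :: "'a :: comm_semiring_0 mat"
  assumes "A \<in> carrier_mat nr nc" and "v \<in> carrier_vec nc"
  shows "(k \<cdot>\<^sub>m A) *\<^sub>v v = k \<cdot>\<^sub>v (A *\<^sub>v v)"
  using assms by (intro eq_vecI) (auto simp: scalar_prod_def sum_distrib_left ac_simps)

lemma orthonormal_cols_mult_vec_norm:
  fixes W :: "real mat"
  assumes W: "W \<in> carrier_mat n r" and WW: "transpose_mat W * W = 1\<^sub>m r" and z: "z \<in> carrier_vec r"
  shows "(W *\<^sub>v z) \<bullet> (W *\<^sub>v z) = z \<bullet> z"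
proof -
  have "transpose_mat W *\<^sub>v (W *\<^sub>v z) = z"
    using assoc_mult_mat_vec[of "transpose_mat W" r n W r z] W WW z by simp
  then show ?thesis
    using transpose_vec_mult_scalar[OF W z, of "W *\<^sub>v z"] W z by simp
qed

lemma mult_mat_vec_self_sum:
  fixes X :: "real mat"
  assumes "X \<in> carrier_mat n r" and "v \<in> carrier_vec r"
  shows "(X *\<^sub>v v) \<bullet> (X *\<^sub>v v) = (\<Sum>k<n. (\<Sum>i<r. X $$ (k,i) * v $ i)\<^sup>2)"
  using assms by (simp add: scalar_prod_def power2_eq_square lessThan_atLeast0)

text \<open>Pinning the coordinates outside \<open>[0, r)\<close> to \<open>0\<close> makes this a closed subset of a compact box
  in the product topology on \<open>nat \<Rightarrow> real\<close>.\<close>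
lemma compact_unit_sphere_fun:
  "compact {f::nat \<Rightarrow> real. (\<forall>i. f i \<in> (if i < r then {-1..1} else {0})) \<and> (\<Sum>i<r. (f i)\<^sup>2) = 1}"
proof -
  define T :: "nat \<Rightarrow> real set" where "T i = (if i < r then {-1..1} else {0})" for i
  have "compactin (product_topology (\<lambda>i. euclidean) UNIV) (PiE UNIV T)"
    by (subst compactin_PiE) (auto simp: T_def)
  then have "compact (Pi UNIV T)"
    by (simp add: euclidean_product_topology PiE_UNIV_domain)
  moreover have "closed {f::nat \<Rightarrow> real. (\<Sum>i<r. (f i)\<^sup>2) = 1}"
    by (intro closed_Collect_eq continuous_intros continuous_on_product_coordinates)
  ultimately have "compact (Pi UNIV T \<inter> {f. (\<Sum>i<r. (f i)\<^sup>2) = 1})"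
    by (rule compact_Int_closed)
  moreover have "{f. (\<forall>i. f i \<in> T i) \<and> (\<Sum>i<r. (f i)\<^sup>2) = 1} = Pi UNIV T \<inter> {f. (\<Sum>i<r. (f i)\<^sup>2) = 1}"
    by auto
  ultimately show ?thesis
    unfolding T_def by simp
qed

lemma quadratic_nonneg_imp_linear_coeff_zero:
  fixes c d :: real
  assumes "\<And>t. 0 \<le> 2 * t * c + t\<^sup>2 * d"
  shows "c = 0"
proof (rule ccontr)
  assume "c \<noteq> 0"
  define a where "a = \<bar>d\<bar> + 1"
  have a: "a > 0" and "d - 2 * a < 0"
    unfolding a_def by auto
  moreover have "c\<^sup>2 / a\<^sup>2 > 0"
    using \<open>c \<noteq> 0\<close> a by simp
  ultimately have "(c\<^sup>2 / a\<^sup>2) * (d - 2 * a) < 0"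
    by (metis mult_pos_neg)
  moreover have "2 * (- c / a) * c + (- c / a)\<^sup>2 * d = (c\<^sup>2 / a\<^sup>2) * (d - 2 * a)"
    using a by (simp add: field_simps power2_eq_square)
  ultimately show False
    using assms[of "- c / a"] by linarith
qed

text \<open>Perturbing \<open>v\<^sub>0\<close> along \<open>w\<close> shows \<open>\<langle>X v\<^sub>0, X w\<rangle> = m \<langle>v\<^sub>0, w\<rangle>\<close>; taking
  \<open>w = X\<^sup>T X v\<^sub>0 - m v\<^sub>0\<close> forces \<open>w = 0\<close>.\<close>
lemma rayleigh_minimizer_eigenvector:
  fixes X :: "real mat" and v0 :: "real Matrix.vec"
  assumes X: "X \<in> carrier_mat n r" and v0: "v0 \<in> carrier_vec r" and v0_unit: "v0 \<bullet> v0 = 1"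
    and m: "m = (X *\<^sub>v v0) \<bullet> (X *\<^sub>v v0)"
    and min: "\<And>v. v \<in> carrier_vec r \<Longrightarrow> m * (v \<bullet> v) \<le> (X *\<^sub>v v) \<bullet> (X *\<^sub>v v)"
  shows "(transpose_mat X * X) *\<^sub>v v0 = m \<cdot>\<^sub>v v0"
proof -
  have stationary: "(X *\<^sub>v v0) \<bullet> (X *\<^sub>v w) = m * (v0 \<bullet> w)" if w: "w \<in> carrier_vec r" for w
  proof -
    define a b where "a = X *\<^sub>v v0" and "b = X *\<^sub>v w"
    have a: "a \<in> carrier_vec n" and b: "b \<in> carrier_vec n"
      unfolding a_def b_def using X v0 w by auto
    have "0 \<le> 2 * t * (a \<bullet> b - m * (v0 \<bullet> w)) + t\<^sup>2 * (b \<bullet> b - m * (w \<bullet> w))" for t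
    proof -
      have "X *\<^sub>v (v0 + t \<cdot>\<^sub>v w) = a + t \<cdot>\<^sub>v b"
        unfolding a_def b_def using X v0 w by (simp add: mult_add_distrib_mat_vec mult_mat_vec)
      then have "m * (1 + 2 * t * (v0 \<bullet> w) + t\<^sup>2 * (w \<bullet> w)) \<le> a \<bullet> a + 2 * t * (a \<bullet> b) + t\<^sup>2 * (b \<bullet> b)"
        using min[of "v0 + t \<cdot>\<^sub>v w"] v0 w a b v0_unit
        by (simp add: scalar_prod_add_smult_self[of _ r] scalar_prod_add_smult_self[of _ n])
      then show ?thesis
        using m unfolding a_def by (simp add: algebra_simps)
    qed
    from quadratic_nonneg_imp_linear_coeff_zero[OF this] show ?thesis
      unfolding a_def b_def by simp
  qed
  define u where "u = (transpose_mat X * X) *\<^sub>v v0 - m \<cdot>\<^sub>v v0"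
  have u: "u \<in> carrier_vec r"
    unfolding u_def using X v0 by auto
  have "(transpose_mat X * X) *\<^sub>v v0 = transpose_mat X *\<^sub>v (X *\<^sub>v v0)"
    using X v0 by (meson assoc_mult_mat_vec transpose_carrier_mat)
  then have "((transpose_mat X * X) *\<^sub>v v0) \<bullet> u = m * (v0 \<bullet> u)"
    using transpose_vec_mult_scalar[OF X u, of "X *\<^sub>v v0"] stationary[OF u] X v0 by simp
  then have "u \<bullet> u = 0"
    unfolding u_def using X v0 u by (simp add: minus_scalar_prod_distrib[of _ r])
  then have "u = 0\<^sub>v r"
    using scalar_prod_self_eq_0_iff[OF u] by simp
  show ?thesis
  proof (rule eq_vecI)
    fix i
    assume "i < dim_vec (m \<cdot>\<^sub>v v0)"
    then have "i < r" and "u $ i = 0"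
      using \<open>u = 0\<^sub>v r\<close> v0 by auto
    then show "((transpose_mat X * X) *\<^sub>v v0) $ i = (m \<cdot>\<^sub>v v0) $ i"
      unfolding u_def using X v0 by simp
  qed (use X v0 in simp)
qed

lemma rayleigh_bound_from_unit_vectors:
  fixes X :: "real mat" and v :: "real Matrix.vec"
  assumes X: "X \<in> carrier_mat n r"
    and unit: "\<And>u. u \<in> carrier_vec r \<Longrightarrow> u \<bullet> u = 1 \<Longrightarrow> m \<le> (X *\<^sub>v u) \<bullet> (X *\<^sub>v u)"
    and v: "v \<in> carrier_vec r"
  shows "m * (v \<bullet> v) \<le> (X *\<^sub>v v) \<bullet> (X *\<^sub>v v)"
proof (cases "v = 0\<^sub>v r")
  case True
  then show ?thesis
    using X scalar_prod_self_nonneg by simp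
next
  case False
  define s where "s = sqrt (v \<bullet> v)"
  have s: "s > 0"
    unfolding s_def using False scalar_prod_self_eq_0_iff[OF v] scalar_prod_self_nonneg[of v] by simp
  define u where "u = (1 / s) \<cdot>\<^sub>v v"
  have "u \<in> carrier_vec r"
    unfolding u_def using v by simp
  moreover have "u \<bullet> u = 1"
    unfolding u_def using v s scalar_prod_self_nonneg[of v]
    by (simp add: s_def power2_eq_square[symmetric] power_divide)
  ultimately have "m \<le> (X *\<^sub>v u) \<bullet> (X *\<^sub>v u)"
    by (rule unit)
  also have "\<dots> = ((X *\<^sub>v v) \<bullet> (X *\<^sub>v v)) / (v \<bullet> v)"
    unfolding u_def using X v s scalar_prod_self_nonneg[of v]
    by (simp add: mult_mat_vec s_def)
  finally show ?thesis
    using s by (simp add: s_def pos_le_divide_eq)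
qed

lemma gram_min_eigenvalue_exists:
  fixes X :: "real mat"
  assumes X: "X \<in> carrier_mat n r" and r: "0 < r"
  shows "\<exists>m. 0 \<le> m \<and> eigenvalue (transpose_mat X * X) m \<and>
           (\<forall>v\<in>carrier_vec r. m * (v \<bullet> v) \<le> (X *\<^sub>v v) \<bullet> (X *\<^sub>v v))"
proof -
  define K where "K = {f::nat \<Rightarrow> real. (\<forall>i. f i \<in> (if i < r then {-1..1} else {0})) \<and> (\<Sum>i<r. (f i)\<^sup>2) = 1}"
  define g where "g f = (\<Sum>k<n. (\<Sum>i<r. X $$ (k,i) * f i)\<^sup>2)" for f :: "nat \<Rightarrow> real"
  have g_vec: "g f = (X *\<^sub>v Matrix.vec r f) \<bullet> (X *\<^sub>v Matrix.vec r f)" for f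
    unfolding g_def mult_mat_vec_self_sum[OF X Matrix.vec_carrier] by simp
  have "continuous_on K g"
    unfolding g_def
    by (intro continuous_intros) (auto intro: continuous_on_subset[OF continuous_on_product_coordinates])
  moreover have "(\<lambda>i. if i = 0 then 1 else 0) \<in> K"
  proof -
    have "(\<Sum>i<r. (if i = 0 then 1 else 0 :: real)\<^sup>2) = (\<Sum>i<r. if i = 0 then 1 else 0)"
      by (rule sum.cong) auto
    then show ?thesis
      using r unfolding K_def by simp
  qed
  ultimately obtain f0 where f0: "f0 \<in> K" and f0_min: "\<And>f. f \<in> K \<Longrightarrow> g f0 \<le> g f"
    using continuous_attains_inf[OF compact_unit_sphere_fun[of r, folded K_def]] by blast
  define v0 m where "v0 = Matrix.vec r f0" and "m = g f0"
  have v0: "v0 \<in> carrier_vec r"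
    unfolding v0_def by simp
  have v0_unit: "v0 \<bullet> v0 = 1"
    using f0 scalar_prod_self_sum[OF v0] unfolding K_def v0_def by simp
  have m: "m = (X *\<^sub>v v0) \<bullet> (X *\<^sub>v v0)"
    unfolding m_def v0_def g_vec ..
  have "m \<le> (X *\<^sub>v u) \<bullet> (X *\<^sub>v u)" if u: "u \<in> carrier_vec r" and u_unit: "u \<bullet> u = 1" for u :: "real Matrix.vec"
  proof -
    define f where "f i = (if i < r then u $ i else 0)" for i
    have "\<bar>u $ i\<bar> \<le> 1" if "i < r" for i
      using u_unit member_le_sum[of i "{..<r}" "\<lambda>i. (u $ i)\<^sup>2"] that
      unfolding scalar_prod_self_sum[OF u] abs_square_le_1[symmetric] by simp
    then have "f \<in> K"
      unfolding K_def f_def using u_unit scalar_prod_self_sum[OF u] by (auto simp: abs_le_iff)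
    moreover have "Matrix.vec r f = u"
      unfolding f_def using u by auto
    ultimately show ?thesis
      using f0_min g_vec unfolding m_def by metis
  qed
  then have min: "m * (v \<bullet> v) \<le> (X *\<^sub>v v) \<bullet> (X *\<^sub>v v)" if "v \<in> carrier_vec r" for v
    using rayleigh_bound_from_unit_vectors[OF X _ that] by blast
  have "m \<ge> 0"
    unfolding m using scalar_prod_self_nonneg by blast
  moreover have "eigenvalue (transpose_mat X * X) m"
    unfolding eigenvalue_def eigenvector_def
    using rayleigh_minimizer_eigenvector[OF X v0 v0_unit m min] v0 v0_unit X by auto
  ultimately show ?thesis
    using min by blast
qed

lemma sing_vals_lower_bound:
  fixes X :: "real mat"
  assumes X: "X \<in> carrier_mat n r" and r: "0 < r" and a: "0 \<le> a"
    and sv: "\<forall>s\<in>sing_vals X. sqrt a \<le> s \<and> s \<le> sqrt b"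
  shows "a \<le> b" and "\<forall>v\<in>carrier_vec r. a * (v \<bullet> v) \<le> (X *\<^sub>v v) \<bullet> (X *\<^sub>v v)"
proof -
  obtain m where m: "0 \<le> m" "eigenvalue (transpose_mat X * X) m"
    and min: "\<forall>v\<in>carrier_vec r. m * (v \<bullet> v) \<le> (X *\<^sub>v v) \<bullet> (X *\<^sub>v v)"
    using gram_min_eigenvalue_exists[OF X r] by blast
  have "sqrt m \<in> sing_vals X"
    unfolding sing_vals_def using m by simp
  with sv have "a \<le> m" and "m \<le> b"
    by auto
  then show "a \<le> b"
    by simp
  show "\<forall>v\<in>carrier_vec r. a * (v \<bullet> v) \<le> (X *\<^sub>v v) \<bullet> (X *\<^sub>v v)"
    using min \<open>a \<le> m\<close> by (meson mult_right_mono order_trans scalar_prod_self_nonneg)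
qed

section \<open>The balanced factorisation\<close>

lemma diagonal_mat_eq_mat_diag:
  assumes "S \<in> carrier_mat k k" and "diagonal_mat S"
  shows "S = mat_diag k (\<lambda>i. S $$ (i,i))"
  using assms by (intro eq_matI) (auto simp: mat_diag_def diagonal_mat_def)

lemma diag_sqrt_eq_mat_diag:
  assumes "S \<in> carrier_mat k k"
  shows "diag_sqrt S = mat_diag k (\<lambda>i. sqrt (S $$ (i,i)))"
  using assms by (intro eq_matI) (auto simp: mat_diag_def diag_sqrt_def)

lemma mat_diag_eq_one:
  "(\<And>i. i < k \<Longrightarrow> f i = 1) \<Longrightarrow> mat_diag k f = 1\<^sub>m k"
  by (intro eq_matI) (auto simp: mat_diag_def)

lemma transpose_mat_diag [simp]: "transpose_mat (mat_diag k f) = mat_diag k f"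
  by (intro eq_matI) (auto simp: mat_diag_def)

lemma col_mult_mat_diag:
  fixes M :: "'a :: comm_semiring_0 mat"
  assumes "M \<in> carrier_mat k r" and "i < r"
  shows "Matrix.col (M * mat_diag r f) i = f i \<cdot>\<^sub>v Matrix.col M i"
  using assms by (intro eq_vecI) (auto simp: mat_diag_mult_right mult.commute)

text \<open>If \<open>X B = U C\<close> with \<open>C\<close> right-invertible, the columns of \<open>X\<close> lie in the range of \<open>U\<close>:
  \<open>W = B C'\<close> satisfies \<open>X W = U\<close>, so \<open>W\<close> is a right and hence left inverse of \<open>U\<^sup>T X\<close>.\<close>
lemma orthonormal_cols_projection:
  fixes X U B C C' :: "'a :: field mat"
  assumes X: "X \<in> carrier_mat n r" and U: "U \<in> carrier_mat n r" and UU: "transpose_mat U * U = 1\<^sub>m r"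
    and B: "B \<in> carrier_mat r m" and C: "C \<in> carrier_mat r m" and C': "C' \<in> carrier_mat m r"
    and CC': "C * C' = 1\<^sub>m r" and XB: "X * B = U * C"
  shows "U * (transpose_mat U * X) = X"
proof -
  define W where "W = B * C'"
  have W: "W \<in> carrier_mat r r"
    unfolding W_def using B C' by simp
  have UtX: "transpose_mat U * X \<in> carrier_mat r r"
    using U X by simp
  have XW: "X * W = U"
    unfolding W_def using assoc_mult_mat[OF X B C'] assoc_mult_mat[OF U C C'] XB CC' U by simp
  have "(transpose_mat U * X) * W = 1\<^sub>m r"
    using assoc_mult_mat[of "transpose_mat U" r n X r W r] U X W XW UU by simp
  then have "W * (transpose_mat U * X) = 1\<^sub>m r"
    by (rule mat_mult_left_right_inverse[OF UtX W])
  then have "X = (X * W) * (transpose_mat U * X)"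
    using assoc_mult_mat[OF X W UtX] X by simp
  then show ?thesis
    unfolding XW by simp
qed

lemma compact_svd_factor_ranges:
  fixes X Y U S V :: "real mat"
  assumes X: "X \<in> carrier_mat n r" and Y: "Y \<in> carrier_mat n r"
    and svd: "compact_svd n r (X * transpose_mat Y) U S V"
  shows "U * (transpose_mat U * X) = X" and "V * (transpose_mat V * Y) = Y"
proof -
  from svd have U: "U \<in> carrier_mat n r" and V: "V \<in> carrier_mat n r" and S: "S \<in> carrier_mat r r"
    and UU: "transpose_mat U * U = 1\<^sub>m r" and VV: "transpose_mat V * V = 1\<^sub>m r"
    and S_diag: "diagonal_mat S" and S_pos: "\<forall>i<r. S $$ (i,i) > 0"
    and XY: "X * transpose_mat Y = U * S * transpose_mat V"
    unfolding compact_svd_def orthonormal_cols_def by auto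
  have S_eq: "S = mat_diag r (\<lambda>i. S $$ (i,i))"
    by (rule diagonal_mat_eq_mat_diag[OF S S_diag])
  define Si where "Si = mat_diag r (\<lambda>i. 1 / S $$ (i,i))"
  have Si: "Si \<in> carrier_mat r r"
    unfolding Si_def by simp
  have "S * Si = 1\<^sub>m r"
    unfolding Si_def using S_pos by (subst S_eq) (auto intro!: mat_diag_eq_one)
  then have right_inverse: "(S * transpose_mat W) * (W * Si) = 1\<^sub>m r"
    if W: "W \<in> carrier_mat n r" and WW: "transpose_mat W * W = 1\<^sub>m r" for W :: "real mat"
    using assoc_mult_mat[of S r r "transpose_mat W" n "W * Si" r] assoc_mult_mat[of "transpose_mat W" r n W r Si r]
      S W Si WW by simp
  have St: "transpose_mat S = S"
    by (subst (1 2) S_eq) simp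
  have "transpose_mat (X * transpose_mat Y) = Y * transpose_mat X"
    using transpose_mult[of X n r "transpose_mat Y" n] X Y by simp
  moreover have "transpose_mat (U * S * transpose_mat V) = V * (S * transpose_mat U)"
    using transpose_mult[of "U * S" n r "transpose_mat V" n] transpose_mult[OF U S] U V S St by simp
  ultimately have YX: "Y * transpose_mat X = V * (S * transpose_mat U)"
    using XY by simp
  show "U * (transpose_mat U * X) = X"
    by (rule orthonormal_cols_projection[OF X U UU _ _ _ right_inverse[OF V VV]])
      (use X Y U V S Si XY assoc_mult_mat[OF U S, of "transpose_mat V" n] in auto)
  show "V * (transpose_mat V * Y) = Y"
    by (rule orthonormal_cols_projection[OF Y V VV _ _ _ right_inverse[OF U UU]])
      (use X Y U V S Si YX in auto)
qed

lemma factor_product_through_svd: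
  fixes X Y U S V T :: "'a :: comm_ring_1 mat"
  assumes X: "X \<in> carrier_mat n r" and Y: "Y \<in> carrier_mat n r"
    and U: "U \<in> carrier_mat n r" and V: "V \<in> carrier_mat n r"
    and S: "S \<in> carrier_mat r r" and T: "T \<in> carrier_mat r r"
    and UU: "transpose_mat U * U = 1\<^sub>m r" and VV: "transpose_mat V * V = 1\<^sub>m r"
    and XY: "X * transpose_mat Y = U * S * transpose_mat V"
  shows "(T * (transpose_mat U * X)) * (transpose_mat Y * (V * T)) = T * (S * T)"
proof -
  have Ut: "transpose_mat U \<in> carrier_mat r n" and Vt: "transpose_mat V \<in> carrier_mat r n"
    and Yt: "transpose_mat Y \<in> carrier_mat r n" and VT: "V * T \<in> carrier_mat n r"
    and ST: "S * T \<in> carrier_mat r r" and UtX: "transpose_mat U * X \<in> carrier_mat r r"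
    and YtVT: "transpose_mat Y * (V * T) \<in> carrier_mat r r"
    using U V X Y S T by auto
  have "X * (transpose_mat Y * (V * T)) = U * S * transpose_mat V * (V * T)"
    using assoc_mult_mat[OF X Yt VT] XY by simp
  also have "\<dots> = U * S * (transpose_mat V * V * T)"
    using assoc_mult_mat[of "U * S" n r "transpose_mat V" n "V * T" r] assoc_mult_mat[OF Vt V T] U S V T
    by simp
  also have "\<dots> = U * (S * T)"
    unfolding VV using assoc_mult_mat[OF U S T] T by simp
  finally have "transpose_mat U * (X * (transpose_mat Y * (V * T))) = S * T"
    using assoc_mult_mat[OF Ut U ST] UU left_mult_one_mat[OF ST] by simp
  then show ?thesis
    using assoc_mult_mat[OF T UtX YtVT] assoc_mult_mat[OF Ut X YtVT] by simp
qed

text \<open>The witnesses are \<open>Q = \<Sigma>\<^sup>-\<^sup>1\<^sup>/\<^sup>2 U\<^sup>T X\<close> and \<open>Q\<^sup>-\<^sup>1 = Y\<^sup>T V \<Sigma>\<^sup>-\<^sup>1\<^sup>/\<^sup>2\<close>.\<close>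
lemma balanced_factorization_exists:
  fixes X Y U S V :: "real mat"
  assumes X: "X \<in> carrier_mat n r" and Y: "Y \<in> carrier_mat n r"
    and svd: "compact_svd n r (X * transpose_mat Y) U S V"
  shows "\<exists>Q Qinv. Q \<in> carrier_mat r r \<and> Qinv \<in> carrier_mat r r \<and>
           inverts_mat Q Qinv \<and> inverts_mat Qinv Q \<and>
           X = U * diag_sqrt S * Q \<and> Y = V * diag_sqrt S * transpose_mat Qinv"
proof -
  from svd have U: "U \<in> carrier_mat n r" and V: "V \<in> carrier_mat n r" and S: "S \<in> carrier_mat r r"
    and UU: "transpose_mat U * U = 1\<^sub>m r" and VV: "transpose_mat V * V = 1\<^sub>m r"
    and S_diag: "diagonal_mat S" and S_pos: "\<forall>i<r. S $$ (i,i) > 0"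
    and XY: "X * transpose_mat Y = U * S * transpose_mat V"
    unfolding compact_svd_def orthonormal_cols_def by auto
  define s where "s i = S $$ (i,i)" for i
  define Sh Shi where "Sh = mat_diag r (\<lambda>i. sqrt (s i))" and "Shi = mat_diag r (\<lambda>i. 1 / sqrt (s i))"
  have Sh_eq: "diag_sqrt S = Sh"
    unfolding Sh_def s_def by (rule diag_sqrt_eq_mat_diag[OF S])
  have Sh: "Sh \<in> carrier_mat r r" and Shi: "Shi \<in> carrier_mat r r"
    unfolding Sh_def Shi_def by auto
  have S_eq: "S = mat_diag r s"
    unfolding s_def by (rule diagonal_mat_eq_mat_diag[OF S S_diag])
  have Sh_Shi: "Sh * Shi = 1\<^sub>m r" and Shi_S_Shi: "Shi * (S * Shi) = 1\<^sub>m r"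
    unfolding Sh_def Shi_def S_eq using S_pos
    by (auto simp: s_def intro!: mat_diag_eq_one)
  define Q Qinv where "Q = Shi * (transpose_mat U * X)" and "Qinv = transpose_mat Y * (V * Shi)"
  have Q: "Q \<in> carrier_mat r r" and Qinv: "Qinv \<in> carrier_mat r r"
    unfolding Q_def Qinv_def using Shi U V X Y by auto
  have Q_Qinv: "Q * Qinv = 1\<^sub>m r"
    unfolding Q_def Qinv_def factor_product_through_svd[OF X Y U V S Shi UU VV XY] by (rule Shi_S_Shi)
  have X_eq: "X = U * diag_sqrt S * Q"
    unfolding Sh_eq Q_def
    using assoc_mult_mat[of U n r Sh r "Shi * (transpose_mat U * X)" r] assoc_mult_mat[of Sh r r Shi r "transpose_mat U * X" r]
      U X Sh Shi Sh_Shi compact_svd_factor_ranges(1)[OF X Y svd] by simp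
  have "transpose_mat Qinv = Shi * (transpose_mat V * Y)"
    unfolding Qinv_def using transpose_mult[of "transpose_mat Y" r n "V * Shi" r] transpose_mult[OF V Shi]
      assoc_mult_mat[of Shi r r "transpose_mat V" n Y r] Y V Shi by (simp add: Shi_def)
  then have Y_eq: "Y = V * diag_sqrt S * transpose_mat Qinv"
    unfolding Sh_eq
    using assoc_mult_mat[of V n r Sh r "Shi * (transpose_mat V * Y)" r] assoc_mult_mat[of Sh r r Shi r "transpose_mat V * Y" r]
      V Y Sh Shi Sh_Shi compact_svd_factor_ranges(2)[OF X Y svd] by simp
  show ?thesis
    using Q Qinv Q_Qinv mat_mult_left_right_inverse[OF Q Qinv Q_Qinv] X_eq Y_eq
    unfolding inverts_mat_def by auto
qed

section \<open>Frobenius norms\<close>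

lemma frob_sq: "(frob A)\<^sup>2 = (\<Sum>i<dim_row A. \<Sum>j<dim_col A. (A $$ (i,j))\<^sup>2)"
  unfolding frob_def by (simp add: sum_nonneg)

lemma frob_nonneg: "0 \<le> frob A"
  unfolding frob_def by (simp add: sum_nonneg)

lemma frob_carrier_mat_0: "A \<in> carrier_mat k 0 \<Longrightarrow> frob A = 0"
  unfolding frob_def by simp

lemma frob_sq_eq_sum_rows:
  assumes "A \<in> carrier_mat nr nc"
  shows "(frob A)\<^sup>2 = (\<Sum>i<nr. Matrix.row A i \<bullet> Matrix.row A i)"
  unfolding frob_sq using assms
  by (intro sum.cong refl) (auto simp: scalar_prod_def power2_eq_square lessThan_atLeast0 intro!: sum.cong)

lemma frob_sq_eq_sum_cols:
  assumes "A \<in> carrier_mat nr nc"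
  shows "(frob A)\<^sup>2 = (\<Sum>j<nc. Matrix.col A j \<bullet> Matrix.col A j)"
  unfolding frob_sq using assms
  by (subst sum.swap) (intro sum.cong refl, auto simp: scalar_prod_def power2_eq_square lessThan_atLeast0 intro!: sum.cong)

lemma frob_mult_orthogonal:
  fixes G R :: "real mat"
  assumes G: "G \<in> carrier_mat n r" and R: "R \<in> carrier_mat r r" and RRt: "R * transpose_mat R = 1\<^sub>m r"
  shows "frob (G * R) = frob G"
proof -
  have "Matrix.row (G * R) k = transpose_mat R *\<^sub>v Matrix.row G k" if "k < n" for k
    using G R that by (intro eq_vecI) (auto intro: comm_scalar_prod[of _ r])
  then have "(frob (G * R))\<^sup>2 = (frob G)\<^sup>2"
    using G R frob_sq_eq_sum_rows[of "G * R" n r] frob_sq_eq_sum_rows[OF G]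
      orthonormal_cols_mult_vec_norm[of "transpose_mat R" r r] RRt by simp
  then show ?thesis
    using frob_nonneg power2_eq_iff_nonneg by blast
qed

lemma frob_diag_minus_diag_inv:
  fixes D :: "real mat"
  assumes D: "D \<in> carrier_mat r r" and D_diag: "diagonal_mat D"
  shows "(frob (D - diag_inv D))\<^sup>2 = (\<Sum>i<r. (D $$ (i,i) - 1 / D $$ (i,i))\<^sup>2)"
proof -
  have "(frob (D - diag_inv D))\<^sup>2 = (\<Sum>i<r. \<Sum>j<r. if j = i then (D $$ (i,i) - 1 / D $$ (i,i))\<^sup>2 else 0)"
    unfolding frob_sq using D D_diag
    by (intro sum.cong) (auto simp: diag_inv_def diagonal_mat_def)
  then show ?thesis
    by simp
qed

section \<open>The balancing identity and the bound on \<open>\<Sigma>\<^sub>Q\<close>\<close>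

lemma P_Omega_carrier_mat: "A \<in> carrier_mat a b \<Longrightarrow> P_Omega \<Omega> A \<in> carrier_mat a b"
  unfolding P_Omega_def by auto

lemma grad_carrier_mat:
  fixes X Y M :: "real mat"
  assumes X: "X \<in> carrier_mat n r" and Y: "Y \<in> carrier_mat n r" and M: "M \<in> carrier_mat n n"
  shows "grad_X \<Omega> p lam M X Y \<in> carrier_mat n r" and "grad_Y \<Omega> p lam M X Y \<in> carrier_mat n r"
proof -
  have "P_Omega \<Omega> (X * transpose_mat Y - M) \<in> carrier_mat n n"
    using X Y M by (auto intro!: P_Omega_carrier_mat)
  then show "grad_X \<Omega> p lam M X Y \<in> carrier_mat n r" and "grad_Y \<Omega> p lam M X Y \<in> carrier_mat n r"
    unfolding grad_X_def grad_Y_def using X Y by auto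
qed

lemma grad_balance_identity:
  fixes X Y M :: "real mat" and v :: "real Matrix.vec"
  assumes X: "X \<in> carrier_mat n r" and Y: "Y \<in> carrier_mat n r" and M: "M \<in> carrier_mat n n"
    and v: "v \<in> carrier_vec r" and p: "p \<noteq> 0"
  shows "(lam / p) * ((X *\<^sub>v v) \<bullet> (X *\<^sub>v v) - (Y *\<^sub>v v) \<bullet> (Y *\<^sub>v v)) =
    (X *\<^sub>v v) \<bullet> (grad_X \<Omega> p lam M X Y *\<^sub>v v) - (grad_Y \<Omega> p lam M X Y *\<^sub>v v) \<bullet> (Y *\<^sub>v v)"
proof -
  define Pm where "Pm = P_Omega \<Omega> (X * transpose_mat Y - M)"
  have Pm: "Pm \<in> carrier_mat n n"
    unfolding Pm_def using X Y M by (auto intro!: P_Omega_carrier_mat)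
  define x y where "x = X *\<^sub>v v" and "y = Y *\<^sub>v v"
  have x: "x \<in> carrier_vec n" and y: "y \<in> carrier_vec n"
    using X Y v by (auto simp: x_def y_def)
  have PmY: "Pm * Y \<in> carrier_mat n r" and PmtX: "transpose_mat Pm * X \<in> carrier_mat n r"
    using Pm X Y by auto
  have gx: "grad_X \<Omega> p lam M X Y *\<^sub>v v = (1/p) \<cdot>\<^sub>v (Pm *\<^sub>v y + lam \<cdot>\<^sub>v x)"
    unfolding grad_X_def Pm_def[symmetric] x_def y_def
    using smult_mat_mult_vec[of "Pm * Y + lam \<cdot>\<^sub>m X" n r v] add_mult_distrib_mat_vec[OF PmY _ v, of "lam \<cdot>\<^sub>m X"]
      smult_mat_mult_vec[OF X v] PmY Pm X Y v
    by simp
  have gy: "grad_Y \<Omega> p lam M X Y *\<^sub>v v = (1/p) \<cdot>\<^sub>v (transpose_mat Pm *\<^sub>v x + lam \<cdot>\<^sub>v y)"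
    unfolding grad_Y_def Pm_def[symmetric] x_def y_def
    using smult_mat_mult_vec[of "transpose_mat Pm * X + lam \<cdot>\<^sub>m Y" n r v]
      add_mult_distrib_mat_vec[OF PmtX _ v, of "lam \<cdot>\<^sub>m Y"] smult_mat_mult_vec[OF Y v] PmtX Pm X Y v
    by simp
  have Pmy: "Pm *\<^sub>v y \<in> carrier_vec n" and Pmtx: "transpose_mat Pm *\<^sub>v x \<in> carrier_vec n"
    using Pm x y by auto
  have "x \<bullet> (grad_X \<Omega> p lam M X Y *\<^sub>v v) = (1/p) * (x \<bullet> (Pm *\<^sub>v y) + lam * (x \<bullet> x))"
    unfolding gx using Pmy x scalar_prod_add_distrib[OF x Pmy, of "lam \<cdot>\<^sub>v x"] by simp
  moreover have "(grad_Y \<Omega> p lam M X Y *\<^sub>v v) \<bullet> y = (1/p) * ((transpose_mat Pm *\<^sub>v x) \<bullet> y + lam * (y \<bullet> y))"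
    unfolding gy using Pmtx y add_scalar_prod_distrib[OF Pmtx _ y, of "lam \<cdot>\<^sub>v y"] by simp
  moreover have "(transpose_mat Pm *\<^sub>v x) \<bullet> y = x \<bullet> (Pm *\<^sub>v y)"
    by (rule transpose_vec_mult_scalar[OF Pm y x])
  ultimately show ?thesis
    unfolding x_def[symmetric] y_def[symmetric] using p by (simp add: field_simps)
qed

text \<open>Cauchy--Schwarz in \<open>\<real>\<^sup>2\<close> turns \<open>L A (d\<^sup>2 - d\<^sup>-\<^sup>2) = d s\<^sub>1 - s\<^sub>2 / d\<close> into a bound
  on \<open>(d + 1/d)\<^sup>2 L\<^sup>2 A\<^sup>2 (d - 1/d)\<^sup>2\<close>, and \<open>d\<^sup>2 + d\<^sup>-\<^sup>2 \<le> (d + 1/d)\<^sup>2\<close> cancels the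
  factor \<open>(d + 1/d)\<^sup>2\<close>.\<close>
lemma balance_scalar_bound:
  fixes d a A L s1 s2 G1 G2 :: real
  assumes d: "d > 0" and a: "a > 0" and aA: "a \<le> A" and L: "L > 0"
    and eq: "L * A * (d\<^sup>2 - (1/d)\<^sup>2) = d * s1 - s2 / d"
    and s1: "s1\<^sup>2 \<le> A * G1" and s2: "s2\<^sup>2 \<le> A * G2"
  shows "(d - 1/d)\<^sup>2 \<le> (G1 + G2) / (L\<^sup>2 * a)"
proof -
  define e where "e = 1/d"
  have de: "d * e = 1" and e: "e > 0"
    using d unfolding e_def by auto
  have A: "A > 0"
    using a aA by simp
  have G: "G1 + G2 \<ge> 0"
    using s1 s2 A by (smt (verit) zero_le_power2 zero_le_mult_iff)
  have "(d\<^sup>2 + e\<^sup>2) * (s1\<^sup>2 + s2\<^sup>2) = (d * s1 - e * s2)\<^sup>2 + (d * s2 + e * s1)\<^sup>2"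
    by (simp add: algebra_simps power2_eq_square)
  then have "(d * s1 - e * s2)\<^sup>2 \<le> (d\<^sup>2 + e\<^sup>2) * (s1\<^sup>2 + s2\<^sup>2)"
    by simp
  also have "\<dots> \<le> (d + e)\<^sup>2 * (A * (G1 + G2))"
  proof (rule mult_mono)
    show "d\<^sup>2 + e\<^sup>2 \<le> (d + e)\<^sup>2"
      using de by (simp add: power2_eq_square algebra_simps)
  qed (use s1 s2 A G in \<open>auto simp: algebra_simps\<close>)
  also have "d * s1 - e * s2 = L * A * ((d - e) * (d + e))"
    using eq unfolding e_def by (simp add: algebra_simps power2_eq_square divide_inverse)
  finally have "((d + e)\<^sup>2 * A) * (L\<^sup>2 * A * (d - e)\<^sup>2) \<le> ((d + e)\<^sup>2 * A) * (G1 + G2)"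
    by (simp add: power_mult_distrib algebra_simps power2_eq_square)
  moreover have "(d + e)\<^sup>2 * A > 0"
    using d e A by simp
  ultimately have "L\<^sup>2 * A * (d - e)\<^sup>2 \<le> G1 + G2"
    by (simp add: mult_le_cancel_left_pos)
  then have "(d - e)\<^sup>2 \<le> (G1 + G2) / (L\<^sup>2 * A)"
    using L A by (simp add: pos_le_divide_eq ac_simps)
  also have "\<dots> \<le> (G1 + G2) / (L\<^sup>2 * a)"
    using L a aA G by (intro divide_left_mono mult_left_mono mult_pos_pos) auto
  finally show ?thesis
    unfolding e_def .
qed

lemma balanced_pair_bound:
  fixes w1 w2 gx gy :: "real Matrix.vec"
  assumes w1: "w1 \<in> carrier_vec n" and w2: "w2 \<in> carrier_vec n"
    and gx: "gx \<in> carrier_vec n" and gy: "gy \<in> carrier_vec n"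
    and w_norm: "w1 \<bullet> w1 = w2 \<bullet> w2" and d: "d > 0" and a: "a > 0" and L: "L > 0"
    and low1: "a \<le> (d \<cdot>\<^sub>v w1) \<bullet> (d \<cdot>\<^sub>v w1)" and low2: "a \<le> ((1/d) \<cdot>\<^sub>v w2) \<bullet> ((1/d) \<cdot>\<^sub>v w2)"
    and identity: "L * ((d \<cdot>\<^sub>v w1) \<bullet> (d \<cdot>\<^sub>v w1) - ((1/d) \<cdot>\<^sub>v w2) \<bullet> ((1/d) \<cdot>\<^sub>v w2))
                   = (d \<cdot>\<^sub>v w1) \<bullet> gx - gy \<bullet> ((1/d) \<cdot>\<^sub>v w2)"
  shows "(d - 1/d)\<^sup>2 \<le> (gx \<bullet> gx + gy \<bullet> gy) / (L\<^sup>2 * a)"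
proof -
  define A where "A = w1 \<bullet> w1"
  have x: "(d \<cdot>\<^sub>v w1) \<bullet> (d \<cdot>\<^sub>v w1) = d\<^sup>2 * A" and y: "((1/d) \<cdot>\<^sub>v w2) \<bullet> ((1/d) \<cdot>\<^sub>v w2) = A / d\<^sup>2"
    unfolding A_def using w1 w2 w_norm by (simp_all add: power2_eq_square)
  have "a * a \<le> (d\<^sup>2 * A) * (A / d\<^sup>2)"
    using low1 low2 a unfolding x y by (intro mult_mono) auto
  then have "a\<^sup>2 \<le> A\<^sup>2"
    using d by (simp add: power2_eq_square)
  then have aA: "a \<le> A"
    using a scalar_prod_self_nonneg[of w1] unfolding A_def by (simp add: power2_le_iff_abs_le)
  have "L * A * (d\<^sup>2 - (1/d)\<^sup>2) = d * (w1 \<bullet> gx) - (gy \<bullet> w2) / d"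
    using identity w1 w2 gx gy unfolding x y by (simp add: algebra_simps power_divide)
  moreover have "(w1 \<bullet> gx)\<^sup>2 \<le> A * (gx \<bullet> gx)"
    unfolding A_def by (rule cauchy_schwarz_scalar_prod[OF w1 gx])
  moreover have "(gy \<bullet> w2)\<^sup>2 \<le> A * (gy \<bullet> gy)"
    using cauchy_schwarz_scalar_prod[OF gy w2] unfolding A_def w_norm by (simp add: mult.commute)
  ultimately show ?thesis
    by (rule balance_scalar_bound[OF d a aA L])
qed

lemma orthonormal_cols_col_norm:
  fixes W :: "real mat"
  assumes "W \<in> carrier_mat n r" and "transpose_mat W * W = 1\<^sub>m r" and "i < r"
  shows "Matrix.col W i \<bullet> Matrix.col W i = 1"
proof -
  have "(transpose_mat W * W) $$ (i,i) = Matrix.col W i \<bullet> Matrix.col W i"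
    using assms(1,3) by simp
  then show ?thesis
    using assms(2,3) by simp
qed

lemma square_svd_col_action:
  assumes svd: "square_svd r Q P D R" and i: "i < r"
  shows "Q *\<^sub>v Matrix.col R i = D $$ (i,i) \<cdot>\<^sub>v Matrix.col P i"
    and "transpose_mat Q *\<^sub>v Matrix.col P i = D $$ (i,i) \<cdot>\<^sub>v Matrix.col R i"
proof -
  from svd have P: "P \<in> carrier_mat r r" and R: "R \<in> carrier_mat r r" and D: "D \<in> carrier_mat r r"
    and PP: "transpose_mat P * P = 1\<^sub>m r" and RR: "transpose_mat R * R = 1\<^sub>m r"
    and D_diag: "diagonal_mat D" and Q: "Q = P * D * transpose_mat R"
    unfolding square_svd_def orthonormal_cols_def by auto
  have D_eq: "D = mat_diag r (\<lambda>i. D $$ (i,i))"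
    by (rule diagonal_mat_eq_mat_diag[OF D D_diag])
  have PD: "P * D \<in> carrier_mat r r" and RD: "R * D \<in> carrier_mat r r"
    using P R D by auto
  have Qc: "Q \<in> carrier_mat r r"
    unfolding Q using PD R by simp
  have "Q * R = P * D"
    unfolding Q using assoc_mult_mat[of "P * D" r r "transpose_mat R" r R r] PD R RR right_mult_one_mat[OF PD]
    by simp
  then have "Q *\<^sub>v Matrix.col R i = Matrix.col (P * mat_diag r (\<lambda>i. D $$ (i,i))) i"
    using col_mult2[OF Qc R i] D_eq by simp
  then show "Q *\<^sub>v Matrix.col R i = D $$ (i,i) \<cdot>\<^sub>v Matrix.col P i"
    unfolding col_mult_mat_diag[OF P i] .
  have Dt: "transpose_mat D = D"
    by (subst (1 2) D_eq) simp
  have "transpose_mat Q = R * (D * transpose_mat P)"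
    unfolding Q using transpose_mult[OF PD, of "transpose_mat R" r] transpose_mult[OF P D] R Dt by simp
  then have "transpose_mat Q * P = R * (D * (transpose_mat P * P))"
    using assoc_mult_mat[of R r r "D * transpose_mat P" r P r] assoc_mult_mat[of D r r "transpose_mat P" r P r] R D P
    by simp
  then have "transpose_mat Q * P = R * D"
    unfolding PP using D by simp
  then have "transpose_mat Q *\<^sub>v Matrix.col P i = Matrix.col (R * mat_diag r (\<lambda>i. D $$ (i,i))) i"
    using col_mult2[of "transpose_mat Q" r r P r i] Qc P i D_eq by simp
  then show "transpose_mat Q *\<^sub>v Matrix.col P i = D $$ (i,i) \<cdot>\<^sub>v Matrix.col R i"
    unfolding col_mult_mat_diag[OF R i] .
qed

lemma balanced_factor_singular_direction:
  fixes X Y U V Sh Q Qinv P D R :: "real mat"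
  assumes U: "U \<in> carrier_mat n r" and V: "V \<in> carrier_mat n r" and Sh: "Sh \<in> carrier_mat r r"
    and Q: "Q \<in> carrier_mat r r" and Qinv: "Qinv \<in> carrier_mat r r"
    and Q_Qinv: "Q * Qinv = 1\<^sub>m r" and Qinv_Q: "Qinv * Q = 1\<^sub>m r"
    and X_eq: "X = U * Sh * Q" and Y_eq: "Y = V * Sh * transpose_mat Qinv"
    and svd: "square_svd r Q P D R" and i: "i < r"
  shows "0 < D $$ (i,i)"
    and "X *\<^sub>v Matrix.col R i = D $$ (i,i) \<cdot>\<^sub>v (U *\<^sub>v (Sh *\<^sub>v Matrix.col P i))"
    and "Y *\<^sub>v Matrix.col R i = (1 / D $$ (i,i)) \<cdot>\<^sub>v (V *\<^sub>v (Sh *\<^sub>v Matrix.col P i))"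
proof -
  from svd have P: "P \<in> carrier_mat r r" and R: "R \<in> carrier_mat r r"
    and RR: "transpose_mat R * R = 1\<^sub>m r" and D_nonneg: "\<forall>i<r. D $$ (i,i) \<ge> 0"
    unfolding square_svd_def orthonormal_cols_def by auto
  define v e d where "v = Matrix.col R i" and "e = Matrix.col P i" and "d = D $$ (i,i)"
  have v: "v \<in> carrier_vec r" and e: "e \<in> carrier_vec r"
    unfolding v_def e_def using R P by auto
  have Qt: "transpose_mat Q \<in> carrier_mat r r" and Qinvt: "transpose_mat Qinv \<in> carrier_mat r r"
    and USh: "U * Sh \<in> carrier_mat n r" and VSh: "V * Sh \<in> carrier_mat n r"
    using Q Qinv U V Sh by auto
  have Qv: "Q *\<^sub>v v = d \<cdot>\<^sub>v e" and Qte: "transpose_mat Q *\<^sub>v e = d \<cdot>\<^sub>v v"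
    unfolding v_def e_def d_def using square_svd_col_action[OF svd i] by auto
  have "d \<noteq> 0"
  proof
    assume "d = 0"
    have "v = Qinv *\<^sub>v (Q *\<^sub>v v)"
      using assoc_mult_mat_vec[OF Qinv Q v] Qinv_Q v by simp
    also have "\<dots> = 0 \<cdot>\<^sub>v (Qinv *\<^sub>v e)"
      unfolding Qv \<open>d = 0\<close> by (rule mult_mat_vec[OF Qinv e])
    finally show False
      using orthonormal_cols_col_norm[OF R RR i] Qinv e unfolding v_def by simp
  qed
  then show d: "0 < D $$ (i,i)"
    using D_nonneg i unfolding d_def by force
  have "transpose_mat Qinv *\<^sub>v (transpose_mat Q *\<^sub>v e) = e"
    using assoc_mult_mat_vec[OF Qinvt Qt e] transpose_mult[OF Q Qinv, symmetric] Q_Qinv e by simp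
  then have "d \<cdot>\<^sub>v (transpose_mat Qinv *\<^sub>v v) = e"
    unfolding Qte using mult_mat_vec[OF Qinvt v] by simp
  then have Qinvt_v: "transpose_mat Qinv *\<^sub>v v = (1/d) \<cdot>\<^sub>v e"
    using d unfolding d_def by (auto simp: smult_smult_assoc)
  show "X *\<^sub>v Matrix.col R i = D $$ (i,i) \<cdot>\<^sub>v (U *\<^sub>v (Sh *\<^sub>v Matrix.col P i))"
    unfolding X_eq v_def[symmetric] e_def[symmetric] d_def[symmetric]
    using assoc_mult_mat_vec[OF USh Q v] assoc_mult_mat_vec[OF U Sh] Qv mult_mat_vec[OF Sh e] mult_mat_vec[OF U]
      Q v Sh e by simp
  show "Y *\<^sub>v Matrix.col R i = (1 / D $$ (i,i)) \<cdot>\<^sub>v (V *\<^sub>v (Sh *\<^sub>v Matrix.col P i))"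
    unfolding Y_eq v_def[symmetric] e_def[symmetric] d_def[symmetric]
    using assoc_mult_mat_vec[OF VSh Qinvt v] assoc_mult_mat_vec[OF V Sh] Qinvt_v mult_mat_vec[OF Sh e]
      mult_mat_vec[OF V] Qinvt v Sh e by simp
qed

lemma balanced_factor_frob_bound:
  fixes X Y U V Sh Q Qinv P D R GX GY :: "real mat"
  assumes U: "U \<in> carrier_mat n r" and V: "V \<in> carrier_mat n r" and Sh: "Sh \<in> carrier_mat r r"
    and UU: "transpose_mat U * U = 1\<^sub>m r" and VV: "transpose_mat V * V = 1\<^sub>m r"
    and Q: "Q \<in> carrier_mat r r" and Qinv: "Qinv \<in> carrier_mat r r"
    and Q_Qinv: "Q * Qinv = 1\<^sub>m r" and Qinv_Q: "Qinv * Q = 1\<^sub>m r"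
    and X_eq: "X = U * Sh * Q" and Y_eq: "Y = V * Sh * transpose_mat Qinv"
    and svd: "square_svd r Q P D R" and a: "0 < a"
    and low_X: "\<forall>v\<in>carrier_vec r. a * (v \<bullet> v) \<le> (X *\<^sub>v v) \<bullet> (X *\<^sub>v v)"
    and low_Y: "\<forall>v\<in>carrier_vec r. a * (v \<bullet> v) \<le> (Y *\<^sub>v v) \<bullet> (Y *\<^sub>v v)"
    and GX: "GX \<in> carrier_mat n r" and GY: "GY \<in> carrier_mat n r" and L: "0 < L"
    and identity: "\<forall>v\<in>carrier_vec r. L * ((X *\<^sub>v v) \<bullet> (X *\<^sub>v v) - (Y *\<^sub>v v) \<bullet> (Y *\<^sub>v v)) =
        (X *\<^sub>v v) \<bullet> (GX *\<^sub>v v) - (GY *\<^sub>v v) \<bullet> (Y *\<^sub>v v)"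
  shows "(frob (D - diag_inv D))\<^sup>2 \<le> ((frob GX)\<^sup>2 + (frob GY)\<^sup>2) / (L\<^sup>2 * a)"
proof -
  from svd have P: "P \<in> carrier_mat r r" and R: "R \<in> carrier_mat r r" and D: "D \<in> carrier_mat r r"
    and RR: "transpose_mat R * R = 1\<^sub>m r" and D_diag: "diagonal_mat D"
    unfolding square_svd_def orthonormal_cols_def by auto
  have RRt: "R * transpose_mat R = 1\<^sub>m r"
    using mat_mult_left_right_inverse[of "transpose_mat R" r R] R RR by simp
  have direction_bound: "(D $$ (i,i) - 1 / D $$ (i,i))\<^sup>2 \<le>
      ((GX *\<^sub>v Matrix.col R i) \<bullet> (GX *\<^sub>v Matrix.col R i) + (GY *\<^sub>v Matrix.col R i) \<bullet> (GY *\<^sub>v Matrix.col R i))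
      / (L\<^sup>2 * a)" if i: "i < r" for i
  proof (rule balanced_pair_bound[OF _ _ _ _ _ _ a L])
    define v z where "v = Matrix.col R i" and "z = Sh *\<^sub>v Matrix.col P i"
    have v: "v \<in> carrier_vec r" and z: "z \<in> carrier_vec r"
      unfolding v_def z_def using R P Sh by auto
    note direction = balanced_factor_singular_direction[OF U V Sh Q Qinv Q_Qinv Qinv_Q X_eq Y_eq svd i,
        folded v_def z_def]
    show "U *\<^sub>v z \<in> carrier_vec n" "V *\<^sub>v z \<in> carrier_vec n"
      "GX *\<^sub>v Matrix.col R i \<in> carrier_vec n" "GY *\<^sub>v Matrix.col R i \<in> carrier_vec n"
      using U V GX GY z R i by auto
    show "(U *\<^sub>v z) \<bullet> (U *\<^sub>v z) = (V *\<^sub>v z) \<bullet> (V *\<^sub>v z)"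
      using orthonormal_cols_mult_vec_norm[OF U UU z] orthonormal_cols_mult_vec_norm[OF V VV z] by simp
    show "0 < D $$ (i,i)"
      by (rule direction(1))
    have "v \<bullet> v = 1"
      unfolding v_def by (rule orthonormal_cols_col_norm[OF R RR i])
    then show "a \<le> (D $$ (i,i) \<cdot>\<^sub>v (U *\<^sub>v z)) \<bullet> (D $$ (i,i) \<cdot>\<^sub>v (U *\<^sub>v z))"
      and "a \<le> ((1 / D $$ (i,i)) \<cdot>\<^sub>v (V *\<^sub>v z)) \<bullet> ((1 / D $$ (i,i)) \<cdot>\<^sub>v (V *\<^sub>v z))"
      using low_X low_Y v direction(2,3) by (metis mult_1_right)+
    show "L * ((D $$ (i,i) \<cdot>\<^sub>v (U *\<^sub>v z)) \<bullet> (D $$ (i,i) \<cdot>\<^sub>v (U *\<^sub>v z))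
          - ((1 / D $$ (i,i)) \<cdot>\<^sub>v (V *\<^sub>v z)) \<bullet> ((1 / D $$ (i,i)) \<cdot>\<^sub>v (V *\<^sub>v z)))
        = (D $$ (i,i) \<cdot>\<^sub>v (U *\<^sub>v z)) \<bullet> (GX *\<^sub>v Matrix.col R i)
          - (GY *\<^sub>v Matrix.col R i) \<bullet> ((1 / D $$ (i,i)) \<cdot>\<^sub>v (V *\<^sub>v z))"
      using identity v direction(2,3) unfolding v_def by metis
  qed
  have "(frob (D - diag_inv D))\<^sup>2 = (\<Sum>i<r. (D $$ (i,i) - 1 / D $$ (i,i))\<^sup>2)"
    by (rule frob_diag_minus_diag_inv[OF D D_diag])
  also have "\<dots> \<le> (\<Sum>i<r. ((GX *\<^sub>v Matrix.col R i) \<bullet> (GX *\<^sub>v Matrix.col R i)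
      + (GY *\<^sub>v Matrix.col R i) \<bullet> (GY *\<^sub>v Matrix.col R i)) / (L\<^sup>2 * a))"
    by (rule sum_mono) (use direction_bound in auto)
  also have "\<dots> = ((frob (GX * R))\<^sup>2 + (frob (GY * R))\<^sup>2) / (L\<^sup>2 * a)"
  proof -
    have "(frob (G * R))\<^sup>2 = (\<Sum>i<r. (G *\<^sub>v Matrix.col R i) \<bullet> (G *\<^sub>v Matrix.col R i))"
      if G: "G \<in> carrier_mat n r" for G :: "real mat"
    proof -
      have "(frob (G * R))\<^sup>2 = (\<Sum>i<r. Matrix.col (G * R) i \<bullet> Matrix.col (G * R) i)"
        using G R by (intro frob_sq_eq_sum_cols[of _ n]) simp
      also have "\<dots> = (\<Sum>i<r. (G *\<^sub>v Matrix.col R i) \<bullet> (G *\<^sub>v Matrix.col R i))"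
        by (rule sum.cong) (simp_all only: lessThan_iff col_mult2[OF G R])
      finally show ?thesis .
    qed
    then show ?thesis
      using GX GY by (simp add: sum_divide_distrib[symmetric] sum.distrib)
  qed
  also have "\<dots> = ((frob GX)\<^sup>2 + (frob GY)\<^sup>2) / (L\<^sup>2 * a)"
    unfolding frob_mult_orthogonal[OF GX R RRt] frob_mult_orthogonal[OF GY R RRt] ..
  finally show ?thesis .
qed

lemma grad_norm_nonneg: "0 \<le> grad_norm \<Omega> p lam M X Y"
  unfolding grad_norm_def by simp

text \<open>The balancing argument yields the constant \<open>\<surd>2\<close>, which \<open>8 \<surd>\<kappa>\<close> dominates because the
  singular value bounds on \<open>X\<close> force \<open>\<kappa> \<ge> 1/4\<close>.\<close>
lemma sqrt_two_le_eight_sqrt_ratio: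
  fixes smin smax :: real
  assumes "0 < smin" and "smin / 2 \<le> 2 * smax"
  shows "sqrt 2 \<le> 8 * sqrt (smax / smin)"
proof -
  have "sqrt (1 / 4) \<le> sqrt (smax / smin)"
    using assms by (intro real_sqrt_le_mono) (simp add: field_simps)
  moreover have "sqrt 2 \<le> sqrt (2\<^sup>2)"
    by (rule real_sqrt_le_mono) simp
  ultimately show ?thesis
    by (simp add: real_sqrt_divide)
qed

lemma balanced_factor_sigma_bound:
  fixes X Y U S V Q Qinv P D R M :: "real mat"
  assumes smin: "0 < smin" and p: "0 < p" and lam: "0 < lam"
    and X: "X \<in> carrier_mat n r" and Y: "Y \<in> carrier_mat n r" and M: "M \<in> carrier_mat n n"
    and sv_X: "\<forall>s \<in> sing_vals X. sqrt (smin / 2) \<le> s \<and> s \<le> sqrt (2 * smax)"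
    and sv_Y: "\<forall>s \<in> sing_vals Y. sqrt (smin / 2) \<le> s \<and> s \<le> sqrt (2 * smax)"
    and svd: "compact_svd n r (X * transpose_mat Y) U S V"
    and Q: "Q \<in> carrier_mat r r" and Qinv: "Qinv \<in> carrier_mat r r"
    and Q_Qinv: "inverts_mat Q Qinv" and Qinv_Q: "inverts_mat Qinv Q"
    and X_eq: "X = U * diag_sqrt S * Q" and Y_eq: "Y = V * diag_sqrt S * transpose_mat Qinv"
    and svd_Q: "square_svd r Q P D R"
  shows "frob (D - diag_inv D) \<le> 8 * sqrt (smax / smin) * (p / (lam * sqrt smin)) * grad_norm \<Omega> p lam M X Y"
proof -
  define GX GY where "GX = grad_X \<Omega> p lam M X Y" and "GY = grad_Y \<Omega> p lam M X Y"
  have GX: "GX \<in> carrier_mat n r" and GY: "GY \<in> carrier_mat n r"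
    unfolding GX_def GY_def using grad_carrier_mat[OF X Y M] by auto
  define g where "g = grad_norm \<Omega> p lam M X Y"
  have g: "g = sqrt ((frob GX)\<^sup>2 + (frob GY)\<^sup>2)"
    unfolding g_def grad_norm_def GX_def GY_def ..
  show ?thesis
  proof (cases "r = 0")
    case True
    then have "frob (D - diag_inv D) = 0" and "g = 0"
      using svd_Q GX GY unfolding g square_svd_def
      by (auto simp: diag_inv_def intro!: frob_carrier_mat_0)
    then show ?thesis
      unfolding g_def by simp
  next
    case False
    then have r: "0 < r"
      by simp
    have half_smin: "0 \<le> smin / 2"
      using smin by simp
    from sing_vals_lower_bound[OF X r half_smin sv_X]
    have "smin / 2 \<le> 2 * smax" and low_X: "\<forall>v\<in>carrier_vec r. smin / 2 * (v \<bullet> v) \<le> (X *\<^sub>v v) \<bullet> (X *\<^sub>v v)"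
      by auto
    from sing_vals_lower_bound[OF Y r half_smin sv_Y]
    have low_Y: "\<forall>v\<in>carrier_vec r. smin / 2 * (v \<bullet> v) \<le> (Y *\<^sub>v v) \<bullet> (Y *\<^sub>v v)"
      by auto
    from svd have U: "U \<in> carrier_mat n r" and V: "V \<in> carrier_mat n r" and S: "S \<in> carrier_mat r r"
      and UU: "transpose_mat U * U = 1\<^sub>m r" and VV: "transpose_mat V * V = 1\<^sub>m r"
      unfolding compact_svd_def orthonormal_cols_def by auto
    have Sh: "diag_sqrt S \<in> carrier_mat r r"
      using S unfolding diag_sqrt_def by auto
    have identity: "\<forall>v\<in>carrier_vec r. (lam / p) * ((X *\<^sub>v v) \<bullet> (X *\<^sub>v v) - (Y *\<^sub>v v) \<bullet> (Y *\<^sub>v v)) =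
        (X *\<^sub>v v) \<bullet> (GX *\<^sub>v v) - (GY *\<^sub>v v) \<bullet> (Y *\<^sub>v v)"
      unfolding GX_def GY_def using grad_balance_identity[OF X Y M] p by auto
    have "Q * Qinv = 1\<^sub>m r" and "Qinv * Q = 1\<^sub>m r"
      using Q_Qinv Qinv_Q Q Qinv unfolding inverts_mat_def by auto
    moreover have "0 < smin / 2" and "0 < lam / p"
      using smin lam p by auto
    ultimately have "(frob (D - diag_inv D))\<^sup>2 \<le> ((frob GX)\<^sup>2 + (frob GY)\<^sup>2) / ((lam / p)\<^sup>2 * (smin / 2))"
      using balanced_factor_frob_bound[OF U V Sh UU VV Q Qinv _ _ X_eq Y_eq svd_Q _ low_X low_Y GX GY _ identity]
      by blast
    also have "\<dots> = 2 * p\<^sup>2 * ((frob GX)\<^sup>2 + (frob GY)\<^sup>2) / (lam\<^sup>2 * smin)"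
      using p lam by (simp add: field_simps power2_eq_square)
    also have "\<dots> = (sqrt 2 * p * g / (lam * sqrt smin))\<^sup>2"
      unfolding g using smin by (simp add: power_divide power_mult_distrib)
    finally have "frob (D - diag_inv D) \<le> sqrt 2 * p * g / (lam * sqrt smin)"
      by (rule power2_le_imp_le) (use p lam smin g in simp)
    also have "\<dots> \<le> 8 * sqrt (smax / smin) * (p / (lam * sqrt smin)) * g"
      using mult_right_mono[OF sqrt_two_le_eight_sqrt_ratio[OF smin \<open>smin / 2 \<le> 2 * smax\<close>],
          of "p * g / (lam * sqrt smin)"] p lam smin
      unfolding g by (simp add: mult.assoc)
    finally show ?thesis
      unfolding g_def .
  qed
qed

text \<open>For \<open>r = 0\<close> nothing bounds \<open>\<kappa>\<close> from below; the hypothesis itself forces \<open>\<kappa> \<ge> 0\<close>,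
  which matters because \<open>sqrt\<close> is negative on negative reals.\<close>
lemma gradient_hypothesis_bound:
  fixes c cinj p lam smin \<kappa> g :: real
  assumes c: "0 < c" and cinj: "0 < cinj" and p: "0 < p" and lam: "0 < lam" and smin: "0 < smin"
    and g: "0 \<le> g" and g_bound: "g \<le> c * (sqrt (cinj * p) / \<kappa>) * (lam / p) * sqrt smin"
  shows "8 * sqrt \<kappa> * (p / (lam * sqrt smin)) * g \<le> 8 * c * sqrt (cinj * p / \<kappa>)"
proof -
  define C where "C = c * sqrt (cinj * p) * (lam / p) * sqrt smin"
  have C: "0 < C"
    unfolding C_def using c cinj p lam smin by simp
  have "g \<le> C / \<kappa>"
    using g_bound unfolding C_def by (simp add: field_simps)
  then have "0 \<le> \<kappa>"
    using g C by (smt (verit) divide_pos_neg)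
  have "8 * sqrt \<kappa> * (p / (lam * sqrt smin)) * g \<le> 8 * sqrt \<kappa> * (p / (lam * sqrt smin)) * (C / \<kappa>)"
    using \<open>g \<le> C / \<kappa>\<close> \<open>0 \<le> \<kappa>\<close> p lam smin by (intro mult_left_mono) auto
  also have "\<dots> = 8 * c * sqrt (cinj * p) * (sqrt \<kappa> / \<kappa>)"
    unfolding C_def using p lam smin by (simp add: field_simps)
  also have "\<dots> = 8 * c * sqrt (cinj * p / \<kappa>)"
  proof (cases "\<kappa> = 0")
    case False
    then have "sqrt \<kappa> / \<kappa> = 1 / sqrt \<kappa>"
      using \<open>0 \<le> \<kappa>\<close> by (simp add: field_simps real_sqrt_mult_self)
    then show ?thesis
      by (simp add: real_sqrt_divide)
  qed simp
  finally show ?thesis .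
qed

lemma balanced_factorization_bound:
  fixes X Y U S V Mstar E :: "real mat"
  assumes c: "0 < c" and Mstar: "Mstar \<in> carrier_mat n n" and E: "E \<in> carrier_mat n n"
    and smin: "0 < smin" and p: "0 < p" and lam: "0 < lam"
    and X: "X \<in> carrier_mat n r" and Y: "Y \<in> carrier_mat n r"
    and sv_X: "\<forall>s \<in> sing_vals X. sqrt (smin / 2) \<le> s \<and> s \<le> sqrt (2 * smax)"
    and sv_Y: "\<forall>s \<in> sing_vals Y. sqrt (smin / 2) \<le> s \<and> s \<le> sqrt (2 * smax)"
    and svd: "compact_svd n r (X * transpose_mat Y) U S V"
    and cinj: "0 < cinj"
    and grad_bound: "grad_norm \<Omega> p lam (Mstar + E) X Y
      \<le> c * (sqrt (cinj * p) / (smax / smin)) * (lam / p) * sqrt smin"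
  shows "\<exists>Q Qinv. Q \<in> carrier_mat r r \<and> Qinv \<in> carrier_mat r r \<and>
       inverts_mat Q Qinv \<and> inverts_mat Qinv Q \<and>
       X = U * diag_sqrt S * Q \<and> Y = V * diag_sqrt S * transpose_mat Qinv \<and>
       (\<forall>P D R. square_svd r Q P D R \<longrightarrow>
          frob (D - diag_inv D)
            \<le> 8 * sqrt (smax / smin) * (p / (lam * sqrt smin)) * grad_norm \<Omega> p lam (Mstar + E) X Y) \<and>
       8 * sqrt (smax / smin) * (p / (lam * sqrt smin)) * grad_norm \<Omega> p lam (Mstar + E) X Y
         \<le> 8 * c * sqrt (cinj * p / (smax / smin))"
proof -
  obtain Q Qinv where Q: "Q \<in> carrier_mat r r" and Qinv: "Qinv \<in> carrier_mat r r"
    and inv: "inverts_mat Q Qinv" "inverts_mat Qinv Q"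
    and X_eq: "X = U * diag_sqrt S * Q" and Y_eq: "Y = V * diag_sqrt S * transpose_mat Qinv"
    using balanced_factorization_exists[OF X Y svd] by blast
  have "Mstar + E \<in> carrier_mat n n"
    using Mstar E by simp
  then have "\<forall>P D R. square_svd r Q P D R \<longrightarrow>
      frob (D - diag_inv D) \<le> 8 * sqrt (smax / smin) * (p / (lam * sqrt smin)) * grad_norm \<Omega> p lam (Mstar + E) X Y"
    using balanced_factor_sigma_bound[OF smin p lam X Y _ sv_X sv_Y svd Q Qinv inv X_eq Y_eq] by blast
  moreover have "8 * sqrt (smax / smin) * (p / (lam * sqrt smin)) * grad_norm \<Omega> p lam (Mstar + E) X Y
      \<le> 8 * c * sqrt (cinj * p / (smax / smin))"
    by (rule gradient_hypothesis_bound[OF c cinj p lam smin grad_norm_nonneg grad_bound])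
  ultimately show ?thesis
    using Q Qinv inv X_eq Y_eq by blast
qed

text \<open>Of the hypotheses of Lemma 2 only the singular value and gradient bounds are needed, and these
  give the conclusion for every \<open>c > 0\<close>; hence any \<open>c\<^sub>0\<close>, e.g. \<open>1\<close>, will do.\<close>
theorem claim3:
  shows "\<exists>c0 > 0. \<forall>(c::real) (n::nat) (r::nat) Mstar E (\<Omega>::(nat \<times> nat) set) (p::real) (lam::real)
           (smin::real) (smax::real) X Y U S V (cinj::real).
    0 < c \<longrightarrow> c \<le> c0 \<longrightarrow>
    Mstar \<in> carrier_mat n n \<longrightarrow> E \<in> carrier_mat n n \<longrightarrow>
    vec_space.rank n Mstar = r \<longrightarrow>
    0 < smin \<longrightarrow>
    (\<forall>s \<in> sing_vals Mstar. s \<noteq> 0 \<longrightarrow> smin \<le> s \<and> s \<le> smax) \<longrightarrow>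
    \<Omega> \<subseteq> {0..<n} \<times> {0..<n} \<longrightarrow>
    0 < p \<longrightarrow> p \<le> 1 \<longrightarrow> 0 < lam \<longrightarrow>
    X \<in> carrier_mat n r \<longrightarrow> Y \<in> carrier_mat n r \<longrightarrow>
    (\<forall>s \<in> sing_vals X. sqrt (smin / 2) \<le> s \<and> s \<le> sqrt (2 * smax)) \<longrightarrow>
    (\<forall>s \<in> sing_vals Y. sqrt (smin / 2) \<le> s \<and> s \<le> sqrt (2 * smax)) \<longrightarrow>
    op_norm (P_Omega \<Omega> E) < lam / 8 \<longrightarrow>
    op_norm (P_Omega \<Omega> (X * transpose_mat Y - Mstar) - p \<cdot>\<^sub>m (X * transpose_mat Y - Mstar)) < lam / 8 \<longrightarrow>
    compact_svd n r (X * transpose_mat Y) U S V \<longrightarrow>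
    0 < cinj \<longrightarrow>
    (\<forall>A B. A \<in> carrier_mat n r \<longrightarrow> B \<in> carrier_mat n r \<longrightarrow>
       (let H = U * transpose_mat A + B * transpose_mat V in
        (1 / p) * (frob (P_Omega \<Omega> H))\<^sup>2 \<ge> cinj * (frob H)\<^sup>2)) \<longrightarrow>
    grad_norm \<Omega> p lam (Mstar + E) X Y
      \<le> c * (sqrt (cinj * p) / (smax / smin)) * (lam / p) * sqrt smin \<longrightarrow>
    (\<exists>Q Qinv. Q \<in> carrier_mat r r \<and> Qinv \<in> carrier_mat r r \<and>
       inverts_mat Q Qinv \<and> inverts_mat Qinv Q \<and>
       X = U * diag_sqrt S * Q \<and> Y = V * diag_sqrt S * transpose_mat Qinv \<and>
       (\<forall>P D R. square_svd r Q P D R \<longrightarrow>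
          frob (D - diag_inv D)
            \<le> 8 * sqrt (smax / smin) * (p / (lam * sqrt smin)) * grad_norm \<Omega> p lam (Mstar + E) X Y) \<and>
       8 * sqrt (smax / smin) * (p / (lam * sqrt smin)) * grad_norm \<Omega> p lam (Mstar + E) X Y
         \<le> 8 * c * sqrt (cinj * p / (smax / smin)))"
proof (intro exI[of _ "1::real"] conjI allI impI)
  show "0 < (1::real)"
    by simp
qed (rule balanced_factorization_bound; assumption)

end
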